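(* Let $n\ge2$ and let $\zeta:\mathfrak{g}_n\to\mathbb{R}$ be a normalized Lie quasi-state on the unitary motion algebra $\mathfrak{g}_n=\mathbb{C}^n\rtimes\mathfrak{u}(n)$. Define $f_\zeta:\mathbb{C}^n\to\mathbb{R}$ by $f_\zeta(w)=\zeta(-iw,\,i\cdot\mathbf{1})$. Then: (i) $f_\zeta$ is a generalized frame function; (ii) if $\zeta$ is continuous, then $f_\zeta$ is continuous and sublinear; (iii) $\zeta$ is uniquely determined by $f_\zeta$; in particular $f_\zeta\equiv0$ implies $\zeta\equiv0$.
   Context: $\mathfrak{g}_n$ is the real Lie algebra $\mathbb{C}^n\times\mathfrak{u}(n)$ with bracket $[(v,X),(w,Y)]=(Xw-Yv,[X,Y])$, where $\mathfrak{u}(n)$ consists of the skew-Hermitian matrices with respect to a fixed Hermitian inner product on $\mathbb{C}^n$, and $\mathbf{1}$ is the identity. A Lie quasi-state is $\zeta$ with $\zeta(aA+bB)=a\zeta(A)+b\zeta(B)$ for all $a,b\in\mathbb{R}$ and commuting $A,B$; it is normalized if $\zeta(v,0)=\zeta(0,X)=0$ for all $v\in\mathbb{C}^n$, $X\in\mathfrak{u}(n)$. A generalized frame function is $f:\mathbb{C}^n\to\mathbb{R}$ with $f(0)=0$ and $f(u+v)=f(u)+f(v)$ for all pairs of orthogonal vectors $u,v\in\mathbb{C}^n\setminus\{0\}$. A function $f$ on $\mathbb{C}^n$ is sublinear if $f(v)/\|v\|\to0$ as $v\to\infty$. *)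

theory Defs
  imports "HOL-Analysis.Analysis"
begin

definition herm_inner :: "complex^'n \<Rightarrow> complex^'n \<Rightarrow> complex" where
  "herm_inner u v = (\<Sum>i\<in>UNIV. u$i * cnj (v$i))"

definition skew_herm :: "complex^'n^'n \<Rightarrow> bool" where
  "skew_herm X \<longleftrightarrow> (\<forall>i j. cnj (X$j$i) = - (X$i$j))"

definition gn :: "((complex^'n) \<times> (complex^'n^'n)) set" where
  "gn = {(v, X). skew_herm X}"

definition lie_bracket ::
  "(complex^'n) \<times> (complex^'n^'n) \<Rightarrow> (complex^'n) \<times> (complex^'n^'n) \<Rightarrow> (complex^'n) \<times> (complex^'n^'n)" where
  "lie_bracket A B = (snd A *v fst B - snd B *v fst A, snd A ** snd B - snd B ** snd A)"

definition lie_quasi_state :: "((complex^'n) \<times> (complex^'n^'n) \<Rightarrow> real) \<Rightarrow> bool" where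
  "lie_quasi_state \<zeta> \<longleftrightarrow>
     (\<forall>A\<in>gn. \<forall>B\<in>gn. lie_bracket A B = 0 \<longrightarrow>
        (\<forall>a b::real. \<zeta> (a *\<^sub>R A + b *\<^sub>R B) = a * \<zeta> A + b * \<zeta> B))"

definition normalized :: "((complex^'n) \<times> (complex^'n^'n) \<Rightarrow> real) \<Rightarrow> bool" where
  "normalized \<zeta> \<longleftrightarrow> (\<forall>v. \<zeta> (v, 0) = 0) \<and> (\<forall>X. skew_herm X \<longrightarrow> \<zeta> (0, X) = 0)"

definition gen_frame_function :: "(complex^'n \<Rightarrow> real) \<Rightarrow> bool" where
  "gen_frame_function f \<longleftrightarrow> f 0 = 0 \<and>
     (\<forall>u v. u \<noteq> 0 \<longrightarrow> v \<noteq> 0 \<longrightarrow> herm_inner u v = 0 \<longrightarrow> f (u + v) = f u + f v)"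

definition sublinear :: "(complex^'n \<Rightarrow> real) \<Rightarrow> bool" where
  "sublinear f \<longleftrightarrow> ((\<lambda>v. f v / norm v) \<longlongrightarrow> 0) at_infinity"

definition f_zeta :: "((complex^'n) \<times> (complex^'n^'n) \<Rightarrow> real) \<Rightarrow> complex^'n \<Rightarrow> real" where
  "f_zeta \<zeta> w = \<zeta> ((- \<i>) *s w, mat \<i>)"

end

theory Submission imports Defs begin

(* The whole argument rests on one observation: for a unit vector e with orthogonal
   projection P onto its complex line, the element (0, i 1) splits as i P + i (1 - P),
   and i P, i (1 - P) are commuting skew-Hermitian matrices.  Hence a quasi-state is
   additive along this splitting, and since it vanishes on pure rotations (0, X) one
   gets zeta (c, i P) = zeta (c, i 1) whenever P c = c.

   (i)  For orthogonal u, v take e = u / |u|; splitting (-i (u + v), i 1) along i P and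
        i (1 - P) yields f(u + v) = f(u) + f(v).
   (ii) Continuity of f is composition; sublinearity follows from the homogeneity
        f(w) / |w| = zeta (x, (1/|w|) i 1) with |x| = 1 and uniform continuity of zeta
        on a compact set where the second component tends to 0.
   (iii) Every nonzero skew-Hermitian X has a unit eigenvector e with eigenvalue i mu,
        mu <> 0 (obtained by maximising |X x| on the unit sphere).  Peeling off the
        commuting summand i mu P from (a, X) strictly enlarges the kernel, and the peeled
        summand is determined by f.  Induction on the rank of X shows that zeta is
        determined by f.  Part (iv) is (iii) applied to the zero quasi-state. *)


lemma herm_inner_commute: "herm_inner v u = cnj (herm_inner u v)"
  by (simp add: herm_inner_def mult.commute)

lemma herm_inner_scale_left: "herm_inner (c *s u) v = c * herm_inner u v"
  by (simp add: herm_inner_def sum_distrib_left mult.assoc)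

lemma herm_inner_scale_right: "herm_inner u (c *s v) = cnj c * herm_inner u v"
  by (simp add: herm_inner_def sum_distrib_left mult_ac)

lemma inner_eq_Re_herm_inner: "inner u v = Re (herm_inner u v)"
  by (simp add: herm_inner_def inner_vec_def inner_complex_def Re_sum)

lemma herm_inner_self: "herm_inner u u = of_real ((norm u)\<^sup>2)"
proof -
  have "Im (herm_inner u u) = 0"
    by (simp add: herm_inner_def Im_sum)
  moreover have "(norm u)\<^sup>2 = Re (herm_inner u u)"
    by (simp add: power2_norm_eq_inner inner_eq_Re_herm_inner)
  ultimately show ?thesis by (simp add: complex_eq_iff)
qed

lemma norm_scale_complex: "norm (c *s u) = cmod c * norm (u :: complex^'n)"
proof -
  have "of_real ((norm (c *s u))\<^sup>2) = (c * cnj c) * of_real ((norm u)\<^sup>2)"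
    by (simp only: herm_inner_self[symmetric] herm_inner_scale_left herm_inner_scale_right mult_ac)
  also have "\<dots> = of_real ((cmod c * norm u)\<^sup>2)"
    by (simp add: complex_norm_square[symmetric] power_mult_distrib)
  finally have "(norm (c *s u))\<^sup>2 = (cmod c * norm u)\<^sup>2"
    using of_real_eq_iff by blast
  then show ?thesis by (simp add: power2_eq_iff_nonneg)
qed

lemma scaleR_eq_scale_complex: "(c::real) *\<^sub>R (x::complex^'n) = complex_of_real c *s x"
  by (simp add: vec_eq_iff scaleR_conv_of_real[of c "x $ i" for i])

lemma matrix_vector_mult_scaleR_complex: "X *v (c *\<^sub>R x) = c *\<^sub>R (X *v (x::complex^'n))"
  by (simp add: scaleR_eq_scale_complex vector_scalar_commute)

lemma skew_herm_adjoint: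
  assumes "skew_herm X"
  shows "herm_inner (X *v u) w = - herm_inner u (X *v w)"
proof -
  have "herm_inner (X *v u) w = (\<Sum>i\<in>UNIV. \<Sum>j\<in>UNIV. X$i$j * u$j * cnj (w$i))"
    by (simp add: herm_inner_def matrix_vector_mult_def sum_distrib_right)
  also have "\<dots> = (\<Sum>j\<in>UNIV. \<Sum>i\<in>UNIV. X$i$j * u$j * cnj (w$i))"
    by (rule sum.swap)
  also have "\<dots> = - (\<Sum>j\<in>UNIV. u$j * cnj (\<Sum>i\<in>UNIV. X$j$i * w$i))"
    using assms unfolding skew_herm_def
    by (simp add: sum_distrib_left sum_negf[symmetric] mult_ac)
  also have "\<dots> = - herm_inner u (X *v w)"
    by (simp add: herm_inner_def matrix_vector_mult_def)
  finally show ?thesis .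
qed


section \<open>Eigenvectors of skew-Hermitian matrices\<close>

lemma quadratic_nonpos_linear_coeff:
  fixes c d :: real
  assumes "\<And>t. 2 * t * c + t\<^sup>2 * d \<le> 0"
  shows "c = 0"
proof -
  define k where "k = \<bar>d\<bar> + 1"
  have k: "k > 0" "2 * k + d > 0" by (auto simp: k_def)
  have "2 * (c / k) * c + (c / k)\<^sup>2 * d \<le> 0" by (rule assms)
  then have "k\<^sup>2 * (2 * (c / k) * c + (c / k)\<^sup>2 * d) \<le> 0"
    by (simp add: mult_nonneg_nonpos)
  also have "k\<^sup>2 * (2 * (c / k) * c + (c / k)\<^sup>2 * d) = c\<^sup>2 * (2 * k + d)"
    using k by (simp add: field_simps power2_eq_square)
  finally have "c\<^sup>2 \<le> 0"
    using k by (simp add: mult_le_0_iff)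
  then show ?thesis by simp
qed

lemma rayleigh_max_first_order:
  fixes X :: "complex^'n^'n"
  assumes le: "\<And>y. (norm (X *v y))\<^sup>2 \<le> \<sigma> * (norm y)\<^sup>2"
    and e: "(norm (X *v e))\<^sup>2 = \<sigma> * (norm e)\<^sup>2"
  shows "inner (X *v e) (X *v v) = \<sigma> * inner e v"
proof -
  have norm_sq: "(norm (a + t *\<^sub>R b))\<^sup>2 = (norm a)\<^sup>2 + 2 * t * inner a b + t\<^sup>2 * (norm b)\<^sup>2"
    for a b :: "complex^'n" and t
    by (simp only: power2_norm_eq_inner)
      (simp add: inner_add inner_commute algebra_simps power2_eq_square)
  have "2 * t * (inner (X *v e) (X *v v) - \<sigma> * inner e v)
        + t\<^sup>2 * ((norm (X *v v))\<^sup>2 - \<sigma> * (norm v)\<^sup>2) \<le> 0" for t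
  proof -
    have "(norm (X *v (e + t *\<^sub>R v)))\<^sup>2 \<le> \<sigma> * (norm (e + t *\<^sub>R v))\<^sup>2" by (rule le)
    also have "X *v (e + t *\<^sub>R v) = X *v e + t *\<^sub>R (X *v v)"
      by (simp add: matrix_vector_right_distrib matrix_vector_mult_scaleR_complex)
    finally show ?thesis using e by (simp add: norm_sq algebra_simps)
  qed
  then show ?thesis
    using quadratic_nonpos_linear_coeff by fastforce
qed

text \<open>For skew-Hermitian \<open>X \<noteq> 0\<close>, a maximiser \<open>e\<close> of \<open>|X x|\<close> on the unit sphere satisfies
  \<open>X\<^sup>2 e = -\<sigma> e\<close> with \<open>\<sigma> > 0\<close> the maximal value of \<open>|X x|\<^sup>2\<close>.\<close>

lemma skew_herm_square_eigenvector:
  fixes X :: "complex^'n^'n"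
  assumes sk: "skew_herm X" and nz: "X \<noteq> 0"
  shows "\<exists>e \<sigma>. norm e = 1 \<and> \<sigma> > 0 \<and> X *v (X *v e) = - (\<sigma> *\<^sub>R e)"
proof -
  obtain x0 :: "complex^'n" where "norm x0 = 1" using vector_choose_size[of 1] by auto
  then have ne: "sphere (0::complex^'n) 1 \<noteq> {}" by auto
  have cont: "continuous_on (sphere 0 1) (\<lambda>x. (norm (X *v x))\<^sup>2)"
    by (intro continuous_intros)
  obtain e where e1: "norm e = 1"
    and emax: "\<And>y. norm y = 1 \<Longrightarrow> (norm (X *v y))\<^sup>2 \<le> (norm (X *v e))\<^sup>2"
    using continuous_attains_sup[OF compact_sphere ne cont] by auto
  define \<sigma> where "\<sigma> = (norm (X *v e))\<^sup>2"
  have le: "(norm (X *v y))\<^sup>2 \<le> \<sigma> * (norm y)\<^sup>2" for y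
  proof (cases "y = 0")
    case False
    have "(norm (X *v ((1 / norm y) *\<^sub>R y)))\<^sup>2 \<le> \<sigma>"
      unfolding \<sigma>_def using False by (intro emax) simp
    then show ?thesis using False
      by (simp add: matrix_vector_mult_scaleR_complex power_divide divide_le_eq mult.commute)
  qed simp
  have first_order: "inner (X *v e) (X *v v) = \<sigma> * inner e v" for v
    by (rule rayleigh_max_first_order[OF le]) (simp add: \<sigma>_def e1)
  define z where "z = X *v (X *v e) + \<sigma> *\<^sub>R e"
  have "inner z v = 0" for v
  proof -
    have "inner (X *v (X *v e)) v = - inner (X *v e) (X *v v)"
      using skew_herm_adjoint[OF sk, of "X *v e" v] by (simp add: inner_eq_Re_herm_inner)
    then show ?thesis using first_order[of v] by (simp add: z_def inner_add_left)
  qed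
  then have "z = 0" using inner_eq_zero_iff by blast
  then have square: "X *v (X *v e) = - (\<sigma> *\<^sub>R e)"
    by (simp add: z_def add_eq_0_iff2)
  obtain x where "X *v x \<noteq> 0" using nz matrix_eq[of X 0] by auto
  then have "0 < \<sigma> * (norm x)\<^sup>2" using le[of x] by (smt (verit) zero_less_power2 norm_eq_zero)
  then have "\<sigma> > 0" by (simp add: zero_less_mult_iff)
  with e1 square show ?thesis by blast
qed

lemma unit_eigenvector:
  assumes "v \<noteq> 0" and "X *v v = c *s (v :: complex^'n)"
  shows "\<exists>u. norm u = 1 \<and> X *v u = c *s u"
proof (intro exI conjI)
  show "norm ((1 / norm v) *\<^sub>R v) = 1" using assms(1) by simp
  show "X *v ((1 / norm v) *\<^sub>R v) = c *s ((1 / norm v) *\<^sub>R v)"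
    using assms(2) by (simp only: matrix_vector_mult_scaleR_complex)
      (simp add: scaleR_eq_scale_complex vector_smult_assoc mult.commute)
qed

text \<open>If \<open>X\<^sup>2 e = -s\<^sup>2 e\<close> with \<open>s > 0\<close>, then \<open>X\<close> has the eigenvalue \<open>i s\<close> or \<open>-i s\<close>:
  either \<open>w = X e + i s e\<close> is an eigenvector for \<open>i s\<close>, or \<open>w = 0\<close> and \<open>e\<close> is one for \<open>-i s\<close>.\<close>

lemma eigenvector_from_square:
  fixes X :: "complex^'n^'n"
  assumes e: "e \<noteq> 0" and s: "s \<noteq> 0"
    and square: "X *v (X *v e) = - ((s * s) *\<^sub>R e)"
  shows "\<exists>e' \<mu>. norm e' = 1 \<and> \<mu> \<noteq> 0 \<and> X *v e' = (\<i> * complex_of_real \<mu>) *s e'"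
proof -
  define w where "w = X *v e + (\<i> * complex_of_real s) *s e"
  have Xw: "X *v w = (\<i> * complex_of_real s) *s w"
    unfolding w_def
    by (simp add: matrix_vector_right_distrib vector_scalar_commute square
        scaleR_eq_scale_complex vec_eq_iff algebra_simps)
  show ?thesis
  proof (cases "w = 0")
    case True
    then have "X *v e = (\<i> * complex_of_real (- s)) *s e"
      unfolding w_def by (simp add: vector_smult_lneg eq_neg_iff_add_eq_0)
    then show ?thesis using unit_eigenvector[OF e] s neg_equal_0_iff_equal by metis
  next
    case False
    then show ?thesis using unit_eigenvector[OF False Xw] s by metis
  qed
qed

lemma skew_herm_eigenvector:
  fixes X :: "complex^'n^'n"
  assumes "skew_herm X" and "X \<noteq> 0"
  shows "\<exists>e \<mu>. norm e = 1 \<and> \<mu> \<noteq> 0 \<and> X *v e = (\<i> * complex_of_real \<mu>) *s e"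
proof -
  obtain e \<sigma> where e: "norm e = 1" and \<sigma>: "\<sigma> > 0" and square: "X *v (X *v e) = - (\<sigma> *\<^sub>R e)"
    using skew_herm_square_eigenvector[OF assms] by blast
  have "e \<noteq> 0" "sqrt \<sigma> \<noteq> 0" using e \<sigma> by auto
  moreover have "X *v (X *v e) = - ((sqrt \<sigma> * sqrt \<sigma>) *\<^sub>R e)"
    using square \<sigma> by simp
  ultimately show ?thesis by (rule eigenvector_from_square)
qed


section \<open>Rank-one projections and commuting splittings\<close>

definition proj_line :: "complex^'n \<Rightarrow> complex^'n^'n" where
  "proj_line e = (\<chi> i j. e$i * cnj (e$j))"

definition cscale :: "complex \<Rightarrow> complex^'n^'n \<Rightarrow> complex^'n^'n" where
  "cscale c M = (\<chi> i j. c * M$i$j)"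

definition hermitian :: "complex^'n^'n \<Rightarrow> bool" where
  "hermitian M \<longleftrightarrow> (\<forall>i j. cnj (M$j$i) = M$i$j)"

lemma proj_line_apply: "proj_line e *v v = herm_inner v e *s e"
  by (simp add: proj_line_def herm_inner_def matrix_vector_mult_def vec_eq_iff
      sum_distrib_left mult_ac)

lemma cscale_apply: "cscale c M *v v = c *s (M *v v)"
  by (simp add: cscale_def matrix_vector_mult_def vec_eq_iff sum_distrib_left mult_ac)

lemma cscale_imaginary: "cscale (\<i> * complex_of_real \<mu>) M = \<mu> *\<^sub>R cscale \<i> M"
  by (simp add: cscale_def vec_eq_iff) (simp add: scaleR_conv_of_real mult_ac)

lemma proj_line_idem: "norm e = 1 \<Longrightarrow> proj_line e *v (proj_line e *v v) = proj_line e *v v"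
  by (simp add: proj_line_apply herm_inner_scale_left herm_inner_self)

lemma hermitian_proj_line: "hermitian (proj_line e)"
  by (simp add: hermitian_def proj_line_def mult.commute)

lemma hermitian_complement: "hermitian M \<Longrightarrow> hermitian (mat 1 - M)"
  by (simp add: hermitian_def mat_def)

lemma skew_herm_imaginary_multiple: "hermitian M \<Longrightarrow> skew_herm (cscale (\<i> * complex_of_real \<mu>) M)"
  by (simp add: hermitian_def skew_herm_def cscale_def)

lemma skew_herm_i_multiple: "hermitian M \<Longrightarrow> skew_herm (cscale \<i> M)"
  using skew_herm_imaginary_multiple[of M 1] by simp

lemma skew_herm_diff: "skew_herm A \<Longrightarrow> skew_herm B \<Longrightarrow> skew_herm (A - B)"
  by (simp add: skew_herm_def)

lemma skew_herm_mat_i: "skew_herm (mat \<i> :: complex^'n^'n)"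
  by (simp add: skew_herm_def mat_def)

lemma skew_herm_scaleR: "skew_herm X \<Longrightarrow> skew_herm ((t::real) *\<^sub>R X)"
  by (simp add: skew_herm_def)

lemma mat_i_split: "(mat \<i> :: complex^'n^'n) = cscale \<i> M + cscale \<i> (mat 1 - M)"
  by (simp add: vec_eq_iff cscale_def mat_def algebra_simps)

text \<open>Multiples of \<open>P\<close> and of \<open>1 - P\<close> commute, \<open>P\<close> being idempotent.\<close>

lemma proj_line_complement_commute:
  assumes "norm e = 1"
  shows "cscale c (proj_line e) ** cscale d (mat 1 - proj_line e)
       = cscale d (mat 1 - proj_line e) ** cscale c (proj_line e)"
proof -
  have "(cscale c (proj_line e) ** cscale d (mat 1 - proj_line e)) *v v
      = (cscale d (mat 1 - proj_line e) ** cscale c (proj_line e)) *v v" for v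
    using proj_line_idem[OF assms, of v]
    by (simp add: matrix_vector_mul_assoc[symmetric] cscale_apply matrix_vector_mult_diff_rdistrib
        vector_scalar_commute matrix_vector_mult_diff_distrib vector_smult_assoc)
  then show ?thesis by (simp add: matrix_eq)
qed

lemma proj_line_normalized:
  assumes u: "u \<noteq> 0" and e: "e = (1 / norm u) *\<^sub>R u"
  shows "norm e = 1" "proj_line e *v u = u" "herm_inner u v = 0 \<Longrightarrow> proj_line e *v v = 0"
proof -
  show "norm e = 1" using assms by simp
  have ee: "e = complex_of_real (1 / norm u) *s u" by (simp add: e scaleR_eq_scale_complex)
  have "herm_inner u e = complex_of_real (norm u)"
    unfolding ee herm_inner_scale_right herm_inner_self using u
    by (simp add: power2_eq_square)
  moreover have "complex_of_real (norm u) *s (complex_of_real (1 / norm u) *s u) = u"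
    using u by (simp add: vector_smult_assoc flip: of_real_mult)
  ultimately show "proj_line e *v u = u" unfolding proj_line_apply by (simp add: ee)
  assume "herm_inner u v = 0"
  then have "herm_inner v u = 0" by (simp add: herm_inner_commute[of v u])
  then show "proj_line e *v v = 0" by (simp add: proj_line_apply ee herm_inner_scale_right)
qed


lemma lie_bracket_zero_iff:
  "lie_bracket (a, X) (b, Y) = 0 \<longleftrightarrow> X *v b = Y *v a \<and> X ** Y = Y ** X"
  by (simp add: lie_bracket_def zero_prod_def)

lemma quasi_state_add:
  assumes "lie_quasi_state \<zeta>" "skew_herm X" "skew_herm Y" "X *v b = Y *v a" "X ** Y = Y ** X"
  shows "\<zeta> (a + b, X + Y) = \<zeta> (a, X) + \<zeta> (b, Y)"
proof -
  have "lie_bracket (a, X) (b, Y) = 0" "(a, X) \<in> gn" "(b, Y) \<in> gn"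
    using assms by (simp_all add: lie_bracket_zero_iff gn_def)
  then have "\<zeta> (1 *\<^sub>R (a, X) + 1 *\<^sub>R (b, Y)) = 1 * \<zeta> (a, X) + 1 * \<zeta> (b, Y)"
    using assms(1) unfolding lie_quasi_state_def by blast
  then show ?thesis by simp
qed

lemma quasi_state_scale:
  assumes "lie_quasi_state \<zeta>" "skew_herm X"
  shows "\<zeta> (c *\<^sub>R a, c *\<^sub>R X) = c * \<zeta> (a, X)"
proof -
  have "lie_bracket (a, X) (a, X) = 0" "(a, X) \<in> gn"
    using assms by (simp_all add: lie_bracket_zero_iff gn_def)
  then have "\<zeta> (c *\<^sub>R (a, X) + 0 *\<^sub>R (a, X)) = c * \<zeta> (a, X) + 0 * \<zeta> (a, X)"
    using assms(1) unfolding lie_quasi_state_def by blast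
  then show ?thesis by simp
qed

lemma quasi_state_proj_split:
  assumes q: "lie_quasi_state \<zeta>" and e: "norm e = 1"
    and a: "proj_line e *v a = a" and b: "proj_line e *v b = 0"
  shows "\<zeta> (a + b, mat \<i>) = \<zeta> (a, cscale \<i> (proj_line e)) + \<zeta> (b, cscale \<i> (mat 1 - proj_line e))"
  unfolding mat_i_split[of "proj_line e"] using a b
  by (intro quasi_state_add[OF q] skew_herm_i_multiple hermitian_proj_line hermitian_complement
      proj_line_complement_commute e)
    (simp add: cscale_apply matrix_vector_mult_diff_rdistrib)

lemma quasi_state_proj_range:
  assumes q: "lie_quasi_state \<zeta>" and nm: "normalized \<zeta>" and e: "norm e = 1"
    and a: "proj_line e *v a = a"
  shows "\<zeta> (a, cscale \<i> (proj_line e)) = \<zeta> (a, mat \<i>)"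
  using quasi_state_proj_split[OF q e a, of 0] nm
  by (simp add: normalized_def skew_herm_i_multiple hermitian_proj_line hermitian_complement)

lemma quasi_state_proj_kernel:
  assumes q: "lie_quasi_state \<zeta>" and nm: "normalized \<zeta>" and e: "norm e = 1"
    and b: "proj_line e *v b = 0"
  shows "\<zeta> (b, cscale \<i> (mat 1 - proj_line e)) = \<zeta> (b, mat \<i>)"
  using quasi_state_proj_split[OF q e _ b, of 0] nm
  by (simp add: normalized_def skew_herm_i_multiple hermitian_proj_line)


section \<open>Part (i): the frame function property\<close>

lemma f_zeta_frame_function:
  fixes \<zeta> :: "(complex^'n) \<times> (complex^'n^'n) \<Rightarrow> real"
  assumes q: "lie_quasi_state \<zeta>" and nm: "normalized \<zeta>"
  shows "gen_frame_function (f_zeta \<zeta>)"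
  unfolding gen_frame_function_def
proof (intro conjI allI impI)
  show "f_zeta \<zeta> 0 = 0" using nm by (simp add: f_zeta_def normalized_def skew_herm_mat_i)
  fix u v :: "complex^'n"
  assume u: "u \<noteq> 0" and "v \<noteq> 0" and orth: "herm_inner u v = 0"
  define e where "e = (1 / norm u) *\<^sub>R u"
  have e: "norm e = 1" and Pu: "proj_line e *v u = u" and Pv: "proj_line e *v v = 0"
    using proj_line_normalized[OF u e_def] orth by simp_all
  have Pa: "proj_line e *v ((- \<i>) *s u) = (- \<i>) *s u"
    by (simp only: vector_scalar_commute Pu)
  have Pb: "proj_line e *v ((- \<i>) *s v) = 0"
    by (simp only: vector_scalar_commute Pv vector_smult_rzero)
  have "f_zeta \<zeta> (u + v) = \<zeta> ((- \<i>) *s u + (- \<i>) *s v, mat \<i>)"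
    by (simp add: f_zeta_def vector_add_ldistrib)
  also have "\<dots> = f_zeta \<zeta> u + f_zeta \<zeta> v"
    unfolding quasi_state_proj_split[OF q e Pa Pb] f_zeta_def
    using quasi_state_proj_range[OF q nm e Pa] quasi_state_proj_kernel[OF q nm e Pb] by simp
  finally show "f_zeta \<zeta> (u + v) = f_zeta \<zeta> u + f_zeta \<zeta> v" .
qed


section \<open>Part (ii): continuity and sublinearity\<close>

lemma f_zeta_continuous:
  fixes \<zeta> :: "(complex^'n) \<times> (complex^'n^'n) \<Rightarrow> real"
  assumes "continuous_on gn \<zeta>"
  shows "continuous_on UNIV (f_zeta \<zeta>)"
proof -
  have "continuous_on UNIV (\<lambda>w::complex^'n. ((- \<i>) *s w, mat \<i> :: complex^'n^'n))"
    unfolding vector_scalar_mult_def by (intro continuous_intros)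
  then have "continuous_on UNIV (\<lambda>w::complex^'n. \<zeta> ((- \<i>) *s w, mat \<i>))"
    by (rule continuous_on_compose2[OF assms]) (auto simp: gn_def skew_herm_mat_i)
  then show ?thesis by (simp add: f_zeta_def[abs_def])
qed

lemma f_zeta_rescaled:
  assumes q: "lie_quasi_state \<zeta>" and w: "w \<noteq> 0"
  shows "f_zeta \<zeta> w / norm w
       = \<zeta> ((1 / norm w) *\<^sub>R ((- \<i>) *s w), (1 / norm w) *\<^sub>R mat \<i>)"
    and "norm ((1 / norm w) *\<^sub>R ((- \<i>) *s w)) = 1"
  using quasi_state_scale[OF q skew_herm_mat_i, of "1 / norm w" "(- \<i>) *s w"] w
  by (simp_all add: f_zeta_def norm_scale_complex)

text \<open>By uniform continuity on the compact set \<open>S\<^sup>2\<^sup>n\<^sup>-\<^sup>1 \<times> [0,1] i 1\<close> and since \<open>\<zeta>\<close> vanishes on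
  \<open>C\<^sup>n \<times> {0}\<close>, \<open>\<zeta> (x, t i 1)\<close> is uniformly small for unit \<open>x\<close> and small \<open>t \<ge> 0\<close>.\<close>

lemma small_rotation_bound:
  fixes \<zeta> :: "(complex^'n) \<times> (complex^'n^'n) \<Rightarrow> real"
  assumes nm: "normalized \<zeta>" and c: "continuous_on gn \<zeta>" and "\<epsilon> > 0"
  obtains d where "d > 0" and "\<And>x t. norm x = 1 \<Longrightarrow> t \<in> {0..1} \<Longrightarrow>
      t * norm (mat \<i> :: complex^'n^'n) < d \<Longrightarrow> \<bar>\<zeta> (x, t *\<^sub>R mat \<i>)\<bar> < \<epsilon>"
proof -
  define M :: "complex^'n^'n" where "M = mat \<i>"
  define K where "K = sphere (0::complex^'n) 1 \<times> ((\<lambda>t::real. t *\<^sub>R M) ` {0..1})"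
  have "compact K" unfolding K_def
    by (intro compact_Times compact_continuous_image continuous_intros) auto
  moreover have "K \<subseteq> gn"
    by (auto simp: K_def gn_def M_def skew_herm_scaleR skew_herm_mat_i)
  ultimately have "uniformly_continuous_on K \<zeta>"
    using compact_uniformly_continuous continuous_on_subset[OF c] by blast
  then obtain d where d: "d > 0" and
    dK: "\<And>y y'. y \<in> K \<Longrightarrow> y' \<in> K \<Longrightarrow> dist y' y < d \<Longrightarrow> dist (\<zeta> y') (\<zeta> y) < \<epsilon>"
    unfolding uniformly_continuous_on_def using \<open>\<epsilon> > 0\<close> by metis
  have "\<bar>\<zeta> (x, t *\<^sub>R M)\<bar> < \<epsilon>" if "norm x = 1" "t \<in> {0..1}" "t * norm M < d" for x t
  proof -
    have "(x, t *\<^sub>R M) \<in> K" "(x, 0 *\<^sub>R M) \<in> K" using that by (auto simp: K_def)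
    moreover have "dist (x, t *\<^sub>R M) (x, 0 *\<^sub>R M) < d"
      using that by (simp add: dist_Pair_Pair dist_norm)
    ultimately show ?thesis
      using dK nm by (fastforce simp: normalized_def dist_real_def)
  qed
  with d show ?thesis using that unfolding M_def by blast
qed

lemma f_zeta_sublinear:
  fixes \<zeta> :: "(complex^'n) \<times> (complex^'n^'n) \<Rightarrow> real"
  assumes q: "lie_quasi_state \<zeta>" and nm: "normalized \<zeta>" and c: "continuous_on gn \<zeta>"
  shows "sublinear (f_zeta \<zeta>)"
  unfolding sublinear_def Lim_at_infinity
proof (intro allI impI)
  fix \<epsilon> :: real assume "\<epsilon> > 0"
  define M :: "complex^'n^'n" where "M = mat \<i>"
  obtain d where d: "d > 0" and small: "\<And>x t. norm x = 1 \<Longrightarrow> t \<in> {0..1} \<Longrightarrow>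
      t * norm M < d \<Longrightarrow> \<bar>\<zeta> (x, t *\<^sub>R M)\<bar> < \<epsilon>"
    using small_rotation_bound[OF nm c \<open>\<epsilon> > 0\<close>] unfolding M_def by blast
  show "\<exists>r. \<forall>w. r \<le> norm w \<longrightarrow> dist (f_zeta \<zeta> w / norm w) 0 < \<epsilon>"
  proof (intro exI allI impI)
    fix w :: "complex^'n"
    assume large: "1 + norm M / d \<le> norm w"
    then have w1: "norm w \<ge> 1" using d by (smt (verit) divide_nonneg_pos norm_ge_zero)
    then have "w \<noteq> 0" by auto
    define t where "t = 1 / norm w"
    have "t \<in> {0..1}" using w1 by (auto simp: t_def divide_le_eq_1)
    have "norm M < d * norm w" using large d by (simp add: field_simps)
    then have "t * norm M < d" using w1 d by (simp add: t_def divide_less_eq mult.commute)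
    with small[OF f_zeta_rescaled(2)[OF q \<open>w \<noteq> 0\<close>]] \<open>t \<in> {0..1}\<close>
    show "dist (f_zeta \<zeta> w / norm w) 0 < \<epsilon>"
      by (simp add: f_zeta_rescaled(1)[OF q \<open>w \<noteq> 0\<close>] t_def M_def dist_real_def)
  qed
qed


section \<open>Part (iii): a quasi-state is determined by its frame function\<close>

lemma eigenline_reduces:
  fixes X :: "complex^'n^'n"
  assumes sk: "skew_herm X" and Xe: "X *v e = c *s e" and c: "cnj c = - c"
  shows "X *v (proj_line e *v w) = c *s (proj_line e *v w)"
    and "proj_line e *v (X *v w) = c *s (proj_line e *v w)"
proof -
  show "X *v (proj_line e *v w) = c *s (proj_line e *v w)"
    by (simp add: proj_line_apply vector_scalar_commute Xe vector_smult_assoc mult.commute)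
  have "herm_inner (X *v w) e = - herm_inner w (X *v e)" by (rule skew_herm_adjoint[OF sk])
  also have "\<dots> = c * herm_inner w e" by (simp add: Xe herm_inner_scale_right c)
  finally show "proj_line e *v (X *v w) = c *s (proj_line e *v w)"
    by (simp add: proj_line_apply vector_smult_assoc)
qed

lemma eigen_peel:
  fixes X :: "complex^'n^'n"
  assumes sk: "skew_herm X" and e: "norm e = 1" and \<mu>: "\<mu> \<noteq> 0"
    and Xe: "X *v e = c *s e" and c: "c = \<i> * complex_of_real \<mu>"
    and P: "P = proj_line e" and Y: "Y = X - cscale c P"
  shows "skew_herm Y"
    and "cscale c P *v (a - P *v a) = Y *v (P *v a)"
    and "cscale c P ** Y = Y ** cscale c P"
    and "dim {x. X *v x = 0} < dim {x. Y *v x = 0}"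
proof -
  have skP: "skew_herm (cscale c P)"
    unfolding c P by (rule skew_herm_imaginary_multiple[OF hermitian_proj_line])
  then show "skew_herm Y" unfolding Y by (rule skew_herm_diff[OF sk])
  have PP: "P *v (P *v w) = P *v w" for w unfolding P by (rule proj_line_idem[OF e])
  have "cnj c = - c" by (simp add: c)
  note XP = eigenline_reduces(1)[OF sk Xe this, folded P]
    and PX = eigenline_reduces(2)[OF sk Xe this, folded P]
  have YP: "Y *v (P *v w) = 0" for w
    by (simp add: Y matrix_vector_mult_diff_rdistrib cscale_apply XP PP)
  show "cscale c P *v (a - P *v a) = Y *v (P *v a)"
    by (simp add: YP cscale_apply matrix_vector_mult_diff_distrib PP)
  have "(cscale c P ** Y) *v w = (Y ** cscale c P) *v w" for w
    by (simp add: matrix_vector_mul_assoc[symmetric] cscale_apply Y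
        matrix_vector_mult_diff_rdistrib matrix_vector_mult_diff_distrib vector_scalar_commute
        XP PX PP vector_ssub_ldistrib)
  then show "cscale c P ** Y = Y ** cscale c P" by (simp add: matrix_eq)
  have subspace_ker: "subspace {x::complex^'n. Z *v x = 0}" for Z :: "complex^'n^'n"
    unfolding subspace_def by (simp add: matrix_vector_right_distrib matrix_vector_mult_scaleR_complex)
  have ker_sub: "{x. X *v x = 0} \<subseteq> {x. Y *v x = 0}"
  proof clarify
    fix v assume Xv: "X *v v = 0"
    have "c *s (P *v v) = 0" using PX[of v] Xv by simp
    then have "P *v v = 0" using \<mu> by (simp add: c vec_eq_iff)
    then show "Y *v v = 0" by (simp add: Y matrix_vector_mult_diff_rdistrib cscale_apply Xv)
  qed
  have "P *v e = e" using e by (simp add: P proj_line_apply herm_inner_self)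
  then have "Y *v e = 0" using YP[of e] by simp
  moreover have "X *v e \<noteq> 0" using Xe e \<mu> c by auto
  ultimately have "span {x. X *v x = 0} \<subset> span {x::complex^'n. Y *v x = 0}"
    using ker_sub by (auto simp: span_eq_iff[THEN iffD2, OF subspace_ker])
  then show "dim {x. X *v x = 0} < dim {x. Y *v x = 0}" by (rule dim_psubset)
qed

lemma quasi_state_rank_one:
  assumes q: "lie_quasi_state \<zeta>" and nm: "normalized \<zeta>" and e: "norm e = 1"
    and b: "proj_line e *v b = b" and \<mu>: "\<mu> \<noteq> 0"
  shows "\<zeta> (b, cscale (\<i> * complex_of_real \<mu>) (proj_line e)) = \<mu> * \<zeta> ((1/\<mu>) *\<^sub>R b, mat \<i>)"
proof -
  have "\<zeta> (b, cscale (\<i> * complex_of_real \<mu>) (proj_line e))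
      = \<zeta> (\<mu> *\<^sub>R ((1/\<mu>) *\<^sub>R b), \<mu> *\<^sub>R cscale \<i> (proj_line e))"
    using \<mu> by (simp add: cscale_imaginary)
  also have "\<dots> = \<mu> * \<zeta> ((1/\<mu>) *\<^sub>R b, cscale \<i> (proj_line e))"
    by (rule quasi_state_scale[OF q skew_herm_i_multiple[OF hermitian_proj_line]])
  also have "\<zeta> ((1/\<mu>) *\<^sub>R b, cscale \<i> (proj_line e)) = \<zeta> ((1/\<mu>) *\<^sub>R b, mat \<i>)"
    by (rule quasi_state_proj_range[OF q nm e]) (simp add: matrix_vector_mult_scaleR_complex b)
  finally show ?thesis .
qed

lemma quasi_states_agree:
  fixes \<zeta> \<zeta>' :: "(complex^'n) \<times> (complex^'n^'n) \<Rightarrow> real"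
  assumes q: "lie_quasi_state \<zeta>" and nm: "normalized \<zeta>"
    and q': "lie_quasi_state \<zeta>'" and nm': "normalized \<zeta>'"
    and agree: "\<And>x. \<zeta> (x, mat \<i>) = \<zeta>' (x, mat \<i>)"
    and sk: "skew_herm X"
  shows "\<zeta> (a, X) = \<zeta>' (a, X)"
  using sk
proof (induction "DIM(complex^'n) - dim {x::complex^'n. X *v x = 0}" arbitrary: X a
    rule: less_induct)
  case less
  show ?case
  proof (cases "X = 0")
    case True
    then show ?thesis using nm nm' by (simp add: normalized_def)
  next
    case False
    obtain e \<mu> where e: "norm e = 1" and \<mu>: "\<mu> \<noteq> 0"
      and Xe: "X *v e = (\<i> * complex_of_real \<mu>) *s e"
      using skew_herm_eigenvector[OF less.prems False] by blast
    define c where "c = \<i> * complex_of_real \<mu>"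
    define P where "P = proj_line e"
    define Y where "Y = X - cscale c P"
    note peel = eigen_peel[OF less.prems e \<mu> Xe[folded c_def] c_def P_def Y_def]
    have split: "\<eta> (a, X) = \<eta> (P *v a, cscale c P) + \<eta> (a - P *v a, Y)"
      if "lie_quasi_state \<eta>" for \<eta>
    proof -
      have "skew_herm (cscale c P)"
        unfolding c_def P_def by (rule skew_herm_imaginary_multiple[OF hermitian_proj_line])
      then have "\<eta> (P *v a + (a - P *v a), cscale c P + Y)
          = \<eta> (P *v a, cscale c P) + \<eta> (a - P *v a, Y)"
        by (rule quasi_state_add[OF that _ peel(1,2,3)])
      then show ?thesis by (simp add: Y_def)
    qed
    have PPa: "P *v (P *v a) = P *v a" unfolding P_def by (rule proj_line_idem[OF e])
    have "\<zeta> (P *v a, cscale c P) = \<zeta>' (P *v a, cscale c P)"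
      using quasi_state_rank_one[OF q nm e _ \<mu>] quasi_state_rank_one[OF q' nm' e _ \<mu>] agree PPa
      by (simp add: c_def P_def)
    moreover have "\<zeta> (a - P *v a, Y) = \<zeta>' (a - P *v a, Y)"
    proof (rule less.hyps[OF _ peel(1)])
      have "dim {x::complex^'n. Y *v x = 0} \<le> DIM(complex^'n)" by (rule dim_subset_UNIV)
      then show "DIM(complex^'n) - dim {x. Y *v x = 0} < DIM(complex^'n) - dim {x. X *v x = 0}"
        using peel(4) by linarith
    qed
    ultimately show ?thesis using split[OF q] split[OF q'] by simp
  qed
qed

lemma f_zeta_determines:
  assumes "lie_quasi_state \<zeta>" "normalized \<zeta>" "lie_quasi_state \<zeta>'" "normalized \<zeta>'"
    and f: "f_zeta \<zeta>' = f_zeta \<zeta>" and A: "A \<in> gn"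
  shows "\<zeta>' A = \<zeta> A"
proof -
  have "\<zeta>' (x, mat \<i>) = \<zeta> (x, mat \<i>)" for x
    using fun_cong[OF f, of "\<i> *s x"] by (simp add: f_zeta_def vector_smult_assoc)
  moreover obtain a X where "A = (a, X)" and "skew_herm X" using A by (auto simp: gn_def)
  ultimately show ?thesis using quasi_states_agree[of \<zeta>' \<zeta>] assms(1-4) by metis
qed


theorem mainTheorem16:
  fixes \<zeta> :: "(complex^'n) \<times> (complex^'n^'n) \<Rightarrow> real"
  assumes "CARD('n) \<ge> 2"
    and "lie_quasi_state \<zeta>" and "normalized \<zeta>"
  shows "gen_frame_function (f_zeta \<zeta>)
    \<and> (continuous_on gn \<zeta> \<longrightarrow> continuous_on UNIV (f_zeta \<zeta>) \<and> sublinear (f_zeta \<zeta>))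
    \<and> (\<forall>\<zeta>'. lie_quasi_state \<zeta>' \<and> normalized \<zeta>' \<and> f_zeta \<zeta>' = f_zeta \<zeta>
            \<longrightarrow> (\<forall>A\<in>gn. \<zeta>' A = \<zeta> A))
    \<and> ((\<forall>w. f_zeta \<zeta> w = 0) \<longrightarrow> (\<forall>A\<in>gn. \<zeta> A = 0))"
proof (intro conjI impI allI ballI)
  show "gen_frame_function (f_zeta \<zeta>)" by (rule f_zeta_frame_function[OF assms(2,3)])
next
  assume "continuous_on gn \<zeta>"
  then show "continuous_on UNIV (f_zeta \<zeta>)" "sublinear (f_zeta \<zeta>)"
    by (simp_all add: f_zeta_continuous f_zeta_sublinear assms(2,3))
next
  fix \<zeta>' :: "(complex^'n) \<times> (complex^'n^'n) \<Rightarrow> real" and A :: "(complex^'n) \<times> (complex^'n^'n)"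
  assume "lie_quasi_state \<zeta>' \<and> normalized \<zeta>' \<and> f_zeta \<zeta>' = f_zeta \<zeta>" "A \<in> gn"
  then show "\<zeta>' A = \<zeta> A" using f_zeta_determines assms(2,3) by blast
next
  fix A :: "(complex^'n) \<times> (complex^'n^'n)"
  assume zero: "\<forall>w. f_zeta \<zeta> w = 0" and A: "A \<in> gn"
  have "lie_quasi_state (\<lambda>_. 0)" "normalized (\<lambda>_. 0)" "f_zeta (\<lambda>_. 0) = f_zeta \<zeta>"
    using zero by (simp_all add: lie_quasi_state_def normalized_def f_zeta_def fun_eq_iff)
  then have "(\<lambda>_. 0) A = \<zeta> A" by (rule f_zeta_determines[OF assms(2,3) _ _ _ A])
  then show "\<zeta> A = 0" by simp
qed

end
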